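(* Let $M=15$. For any integers $i,j\ge1$ and any $J\in\mathcal D_i$, the set $J\cap\widehat Q_i^j$ is a union of at most $M$ intervals in $\mathcal D_{i+j}$. Consequently, $\widehat Q_i^j$ consists of at most $M2^i$ intervals in $\mathcal D_{i+j}$, and $|Q_i^j|\le|\widehat Q_i^j|\le M2^{-j}$.
   Context: $\mathbb T=\mathbb R/\mathbb Z\cong[0,1)$, $Tx=2x\bmod1$, $d(t,s)=\|t-s\|$ the distance on $\mathbb T$. $\mathcal D_k$ is the collection of dyadic intervals $[m/2^k,(m+1)/2^k)$, $0\le m<2^k$. For $i,j\ge1$, $Q_i^j=\{x\in\mathbb T:d(T^ix,x)\le2^{-j}\}$, and $\widehat Q_i^j$ is the union of all intervals in $\mathcal D_{i+j}$ that intersect $Q_i^j$. $|\cdot|$ denotes Lebesgue measure. *)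

theory Defs
  imports "HOL-Analysis.Analysis"
begin

text \<open>The circle T = R/Z is represented by its fundamental domain [0,1).\<close>

definition circ :: "real set" where
  "circ = {0..<1}"

definition dbl :: "real \<Rightarrow> real" where
  "dbl x = frac (2 * x)"

definition tdist :: "real \<Rightarrow> real \<Rightarrow> real" where
  "tdist t s = min (frac (t - s)) (1 - frac (t - s))"

definition dint :: "nat \<Rightarrow> nat \<Rightarrow> real set" where
  "dint k m = {real m / 2 ^ k ..< (real m + 1) / 2 ^ k}"

definition Dyad :: "nat \<Rightarrow> real set set" where
  "Dyad k = {dint k m | m. m < 2 ^ k}"

definition Q :: "nat \<Rightarrow> nat \<Rightarrow> real set" where
  "Q i j = {x \<in> circ. tdist ((dbl ^^ i) x) x \<le> 2 powi (- int j)}"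

definition Qhat :: "nat \<Rightarrow> nat \<Rightarrow> real set" where
  "Qhat i j = \<Union> {I \<in> Dyad (i + j). I \<inter> Q i j \<noteq> {}}"

end

theory Submission
  imports Defs
begin

text \<open>A point x of Q_i^j satisfies |(2^i - 1) x - p| \<le> 2^-j for some integer p. On an
interval J of generation i the quantity (2^i - 1) x varies by less than 1, so only two values
of p occur there; for each of them the admissible x fill an interval of length
2^(1-j) / (2^i - 1) \<le> 4 \<cdot> 2^-(i+j), which meets at most 5 intervals of generation i + j.
Hence J \<inter> Qhat_i^j consists of at most 10 such intervals, Qhat_i^j of at most 10 \<cdot> 2^i, and
its measure is at most 10 \<cdot> 2^-j.\<close>

lemma mem_dint_iff_floor: "x \<in> dint k m \<longleftrightarrow> \<lfloor>x * 2 ^ k\<rfloor> = int m"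
  by (simp add: dint_def floor_eq_iff divide_simps)

lemma dint_subset_dint_div: "dint (i + j) m \<subseteq> dint i (m div 2 ^ j)"
proof
  fix x assume "x \<in> dint (i + j) m"
  then have "\<lfloor>x * 2 ^ (i + j)\<rfloor> = int m" by (simp add: mem_dint_iff_floor)
  moreover have "\<lfloor>x * 2 ^ (i + j) / real_of_int (2 ^ j)\<rfloor> = \<lfloor>x * 2 ^ (i + j)\<rfloor> div 2 ^ j"
    by (rule floor_divide_real_eq_div) simp
  ultimately have "\<lfloor>x * 2 ^ i\<rfloor> = int m div 2 ^ j" by (simp add: power_add)
  then show "x \<in> dint i (m div 2 ^ j)" by (simp add: mem_dint_iff_floor zdiv_int)
qed

lemma dint_inter_nonempty_imp_eq: "dint k m \<inter> dint k m' \<noteq> {} \<Longrightarrow> m = m'"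
  by (auto simp: mem_dint_iff_floor)

lemma dint_nested:
  assumes "dint (i + j) m \<inter> dint i n \<noteq> {}"
  shows "dint (i + j) m \<subseteq> dint i n"
proof -
  have "dint i (m div 2 ^ j) \<inter> dint i n \<noteq> {}" using assms dint_subset_dint_div by blast
  then show ?thesis using dint_subset_dint_div dint_inter_nonempty_imp_eq by metis
qed

lemma circ_eq_Union_Dyad: "circ = \<Union> (Dyad k)"
proof (intro equalityI subsetI)
  fix x assume "x \<in> circ"
  then have "0 \<le> x * 2 ^ k" "x * 2 ^ k < 2 ^ k" by (auto simp: circ_def)
  then have "0 \<le> \<lfloor>x * 2 ^ k\<rfloor>" "\<lfloor>x * 2 ^ k\<rfloor> < 2 ^ k"
    by (simp_all add: floor_less_iff)
  then have "nat \<lfloor>x * 2 ^ k\<rfloor> < 2 ^ k" "x \<in> dint k (nat \<lfloor>x * 2 ^ k\<rfloor>)"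
    by (simp_all add: nat_less_iff mem_dint_iff_floor)
  then show "x \<in> \<Union> (Dyad k)" unfolding Dyad_def by blast
next
  fix x assume "x \<in> \<Union> (Dyad k)"
  then obtain m where m: "m < 2 ^ k" "\<lfloor>x * 2 ^ k\<rfloor> = int m"
    by (auto simp: Dyad_def mem_dint_iff_floor)
  then have "real (m + 1) \<le> real ((2::nat) ^ k)" by (simp only: of_nat_le_iff)
  then have "real m + 1 \<le> 2 ^ k" by simp
  moreover have "real m \<le> x * 2 ^ k" "x * 2 ^ k < real m + 1"
    using m(2) by (simp_all add: floor_eq_iff)
  ultimately have "0 \<le> x * 2 ^ k" "x * 2 ^ k < 2 ^ k" by linarith+
  then show "x \<in> circ" using mult_le_cancel_right_pos[of "2 ^ k" 0 x] by (simp add: circ_def)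
qed

lemma finite_Dyad: "finite (Dyad k)"
  by (simp add: Dyad_def)

lemma card_Dyad_le: "card (Dyad k) \<le> 2 ^ k"
proof -
  have "Dyad k = dint k ` {..<2 ^ k}" by (auto simp: Dyad_def)
  then show ?thesis using card_image_le[of "{..<2 ^ k}" "dint k"] by simp
qed

lemma dint_lmeasurable: "dint k m \<in> lmeasurable"
  unfolding dint_def
  by (rule fmeasurableI2[OF lmeasurable_interval(1)[of "real m / 2 ^ k" "(real m + 1) / 2 ^ k"]]) auto

lemma measure_dint: "measure lebesgue (dint k m) = 1 / 2 ^ k"
  by (simp add: dint_def divide_simps)

lemma Union_Dyad_lmeasurable: "F \<subseteq> Dyad k \<Longrightarrow> \<Union> F \<in> lmeasurable"
  using finite_subset[OF _ finite_Dyad] dint_lmeasurable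
  by (intro fmeasurable.finite_Union) (auto simp: Dyad_def)

lemma measure_Union_Dyad_le:
  assumes "F \<subseteq> Dyad k"
  shows "measure lebesgue (\<Union> F) \<le> card F / 2 ^ k"
proof -
  have "finite F" using assms finite_subset finite_Dyad by blast
  have "measure lebesgue (\<Union> F) \<le> (\<Sum>I\<in>F. measure lebesgue I)"
    using \<open>finite F\<close> assms dint_lmeasurable by (intro measure_Union_le) (auto simp: Dyad_def)
  also have "\<dots> = (\<Sum>I\<in>F. 1 / 2 ^ k)"
    using assms by (intro sum.cong) (auto simp: Dyad_def measure_dint)
  finally show ?thesis by simp
qed

lemma card_Dyad_meeting_interval_le:
  fixes a b :: real and L :: nat
  assumes "(b - a) * 2 ^ k \<le> L"
  shows "card {I \<in> Dyad k. I \<inter> {a..b} \<noteq> {}} \<le> L + 1"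
proof -
  define z where "z = \<lfloor>a * 2 ^ k\<rfloor>"
  have "{I \<in> Dyad k. I \<inter> {a..b} \<noteq> {}} \<subseteq> (\<lambda>l. dint k (nat l)) ` {z..z + L}"
  proof
    fix I assume "I \<in> {I \<in> Dyad k. I \<inter> {a..b} \<noteq> {}}"
    then obtain m where I: "I = dint k m" and "I \<inter> {a..b} \<noteq> {}"
      by (auto simp: Dyad_def)
    then obtain x where x: "x \<in> I" "a \<le> x" "x \<le> b" by auto
    have "x * 2 ^ k \<le> b * 2 ^ k" using x by simp
    moreover have "(b - a) * 2 ^ k = b * 2 ^ k - a * 2 ^ k" by (simp add: algebra_simps)
    ultimately have "x * 2 ^ k \<le> a * 2 ^ k + L" using assms by linarith
    then have "\<lfloor>x * 2 ^ k\<rfloor> \<le> z + L" unfolding z_def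
      by (metis floor_add_int floor_mono of_int_of_nat_eq)
    moreover have "z \<le> \<lfloor>x * 2 ^ k\<rfloor>" unfolding z_def using x by (intro floor_mono) simp
    moreover have "\<lfloor>x * 2 ^ k\<rfloor> = int m" using x I by (simp add: mem_dint_iff_floor)
    ultimately show "I \<in> (\<lambda>l. dint k (nat l)) ` {z..z + L}"
      using I by (intro image_eqI[of _ _ "int m"]) auto
  qed
  then have "card {I \<in> Dyad k. I \<inter> {a..b} \<noteq> {}} \<le> card {z..z + L}"
    by (meson card_image_le card_mono finite_atLeastAtMost_int finite_imageI order_trans)
  then show ?thesis by simp
qed

lemma dbl_iterate: "x \<in> circ \<Longrightarrow> (dbl ^^ i) x = frac (2 ^ i * x)"
proof (induction i)
  case 0
  then show ?case by (simp add: circ_def frac_eq)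
next
  case (Suc i)
  have "frac (2 * frac (2 ^ i * x)) = frac (2 * (2 ^ i * x) + of_int (- 2 * \<lfloor>2 ^ i * x\<rfloor>))"
    unfolding frac_def by (simp add: algebra_simps)
  also have "\<dots> = frac (2 ^ Suc i * x)"
    by (simp only: frac_add_of_int_right) (simp add: mult.assoc)
  finally show ?case using Suc by (simp add: dbl_def)
qed

lemma Q_subset_circ: "Q i j \<subseteq> circ"
  by (auto simp: Q_def)

lemma Q_borel: "Q i j \<in> sets borel"
proof -
  have "Q i j = {x. 0 \<le> x \<and> x < 1 \<and> tdist (frac (2 ^ i * x)) x \<le> 2 powi (- int j)}"
    by (auto simp: Q_def circ_def dbl_iterate)
  also have "\<dots> \<in> sets borel"
    unfolding tdist_def frac_def by measurable
  finally show ?thesis .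
qed

lemma tdist_le_imp_near_int:
  assumes "tdist t s \<le> e"
  obtains p :: int where "\<bar>t - s - p\<bar> \<le> e"
proof (cases "frac (t - s) \<le> e")
  case True
  then show ?thesis by (intro that[of "\<lfloor>t - s\<rfloor>"]) (simp add: frac_def)
next
  case False
  then have "1 - frac (t - s) \<le> e" using assms by (simp add: tdist_def)
  moreover have "frac (t - s) < 1" by (rule frac_lt_1)
  ultimately show ?thesis by (intro that[of "\<lfloor>t - s\<rfloor> + 1"]) (simp add: frac_def)
qed

lemma Q_near_int:
  assumes "x \<in> Q i j"
  obtains p :: int where "\<bar>(2 ^ i - 1) * x - p\<bar> \<le> 1 / 2 ^ j"
proof -
  have "tdist (frac (2 ^ i * x)) x \<le> 1 / 2 ^ j"
    using assms by (auto simp: Q_def dbl_iterate power_int_minus_divide)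
  then obtain p :: int where "\<bar>frac (2 ^ i * x) - x - p\<bar> \<le> 1 / 2 ^ j"
    by (rule tdist_le_imp_near_int)
  moreover have "frac (2 ^ i * x) - x - p = (2 ^ i - 1) * x - (\<lfloor>2 ^ i * x\<rfloor> + p)"
    by (simp add: frac_def algebra_simps)
  ultimately show ?thesis by (intro that[of "\<lfloor>2 ^ i * x\<rfloor> + p"]) simp
qed

lemma near_int_of_unit_interval_cases:
  fixes y lo d :: real and p :: int
  assumes "lo \<le> y" "y < lo + 1" "\<bar>y - p\<bar> \<le> d" "2 * d \<le> 1"
  shows "p = \<lceil>lo - d\<rceil> \<or> p = \<lceil>lo - d\<rceil> + 1"
proof -
  have "\<lceil>lo - d\<rceil> \<le> p" using assms by (simp add: ceiling_le_iff abs_le_iff)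
  moreover have "p < \<lceil>lo - d\<rceil> + 2"
    using assms le_of_int_ceiling[of "lo - d"] unfolding abs_le_iff by linarith
  ultimately show ?thesis by linarith
qed

lemma Q_inter_dint_subset:
  assumes "i \<ge> 1" "j \<ge> 1"
  fixes N d :: real
  defines "N \<equiv> 2 ^ i - 1" and "d \<equiv> 1 / 2 ^ j"
  obtains p :: int where "Q i j \<inter> dint i n \<subseteq> (\<Union>q\<in>{p, p + 1}. {(q - d) / N .. (q + d) / N})"
proof
  have "2 ^ 1 \<le> (2::real) ^ i" "2 ^ 1 \<le> (2::real) ^ j"
    using assms(1,2) by (intro power_increasing; simp)+
  then have N: "0 < N" "N < 2 ^ i" and d: "2 * d \<le> 1"
    by (auto simp: N_def d_def)
  define lo where "lo = N * n / 2 ^ i"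
  show "Q i j \<inter> dint i n \<subseteq> (\<Union>q\<in>{\<lceil>lo - d\<rceil>, \<lceil>lo - d\<rceil> + 1}. {(q - d) / N .. (q + d) / N})"
  proof
    fix x assume x: "x \<in> Q i j \<inter> dint i n"
    then obtain q :: int where q: "\<bar>N * x - q\<bar> \<le> d"
      using Q_near_int unfolding N_def d_def by blast
    have "n / 2 ^ i \<le> x" "x < (real n + 1) / 2 ^ i"
      using x by (auto simp: dint_def)
    then have "N * (n / 2 ^ i) \<le> N * x" "N * x < N * ((real n + 1) / 2 ^ i)"
      using N by (intro mult_left_mono mult_strict_left_mono; simp)+
    then have "lo \<le> N * x" "N * x < lo + N / 2 ^ i"
      by (simp_all add: lo_def add_divide_distrib distrib_left)
    moreover have "N / 2 ^ i < 1" using N by simp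
    ultimately have "lo \<le> N * x" "N * x < lo + 1" by linarith+
    then have "q = \<lceil>lo - d\<rceil> \<or> q = \<lceil>lo - d\<rceil> + 1"
      using q d by (rule near_int_of_unit_interval_cases)
    moreover have "x \<in> {(q - d) / N .. (q + d) / N}"
      using q N by (auto simp: abs_le_iff field_simps)
    ultimately show "x \<in> (\<Union>q\<in>{\<lceil>lo - d\<rceil>, \<lceil>lo - d\<rceil> + 1}. {(q - d) / N .. (q + d) / N})"
      by blast
  qed
qed

definition Qhat_cells :: "nat \<Rightarrow> nat \<Rightarrow> real set \<Rightarrow> real set set" where
  "Qhat_cells i j J = {I \<in> Dyad (i + j). I \<inter> Q i j \<noteq> {} \<and> I \<subseteq> J}"

lemma card_Qhat_cells_le:
  assumes "i \<ge> 1" "j \<ge> 1"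
  shows "card (Qhat_cells i j (dint i n)) \<le> 10"
proof -
  define N :: real where "N = 2 ^ i - 1"
  define d :: real where "d = 1 / 2 ^ j"
  define C where "C q = {I \<in> Dyad (i + j). I \<inter> {(q - d) / N .. (q + d) / N} \<noteq> {}}" for q :: int
  obtain p :: int where p: "Q i j \<inter> dint i n \<subseteq> (\<Union>q\<in>{p, p + 1}. {(q - d) / N .. (q + d) / N})"
    unfolding N_def d_def by (rule Q_inter_dint_subset[OF assms, where n = n])
  have "2 ^ 1 \<le> (2::real) ^ i" using assms(1) by (intro power_increasing) simp_all
  then have N: "0 < N" "2 * 2 ^ i \<le> 4 * N" by (simp_all add: N_def)
  have "((q + d) / N - (q - d) / N) * 2 ^ (i + j) = 2 * 2 ^ i / N" for q :: int
    by (simp add: d_def power_add diff_divide_distrib[symmetric])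
  also have "\<dots> \<le> real 4" using N by (simp add: pos_divide_le_eq)
  finally have C5: "card (C q) \<le> 5" for q
    unfolding C_def using card_Dyad_meeting_interval_le[where L = 4] by simp
  have "Qhat_cells i j (dint i n) \<subseteq> C p \<union> C (p + 1)"
  proof
    fix I assume "I \<in> Qhat_cells i j (dint i n)"
    then obtain x where I: "I \<in> Dyad (i + j)" "x \<in> I" "x \<in> Q i j" "I \<subseteq> dint i n"
      by (auto simp: Qhat_cells_def)
    then have "x \<in> (\<Union>q\<in>{p, p + 1}. {(q - d) / N .. (q + d) / N})" using p by blast
    then show "I \<in> C p \<union> C (p + 1)" using I by (auto simp: C_def)
  qed
  moreover have "finite (C q)" for q
    unfolding C_def using finite_Dyad by simp
  ultimately have "card (Qhat_cells i j (dint i n)) \<le> card (C p \<union> C (p + 1))"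
    by (intro card_mono) auto
  also have "\<dots> \<le> 10" using card_Un_le[of "C p" "C (p + 1)"] C5[of p] C5[of "p + 1"] by linarith
  finally show ?thesis .
qed

lemma Int_Qhat_eq_Union_Qhat_cells:
  assumes "J \<in> Dyad i"
  shows "J \<inter> Qhat i j = \<Union> (Qhat_cells i j J)"
proof (intro equalityI subsetI)
  fix x assume x: "x \<in> J \<inter> Qhat i j"
  then obtain I where I: "I \<in> Dyad (i + j)" "I \<inter> Q i j \<noteq> {}" "x \<in> I"
    by (auto simp: Qhat_def)
  then have "I \<subseteq> J" using x assms dint_nested by (fastforce simp: Dyad_def)
  with I show "x \<in> \<Union> (Qhat_cells i j J)" by (auto simp: Qhat_cells_def)
qed (auto simp: Qhat_cells_def Qhat_def)

lemma Qhat_cover_eq_UN_Qhat_cells: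
  "{I \<in> Dyad (i + j). I \<inter> Q i j \<noteq> {}} = (\<Union>J\<in>Dyad i. Qhat_cells i j J)"
proof (intro equalityI subsetI)
  fix I assume I: "I \<in> {I \<in> Dyad (i + j). I \<inter> Q i j \<noteq> {}}"
  then obtain m where m: "I = dint (i + j) m" "m < 2 ^ i * 2 ^ j"
    by (auto simp: Dyad_def power_add)
  then have "dint i (m div 2 ^ j) \<in> Dyad i"
    by (auto simp: Dyad_def less_mult_imp_div_less)
  moreover have "I \<in> Qhat_cells i j (dint i (m div 2 ^ j))"
    using I m dint_subset_dint_div by (auto simp: Qhat_cells_def)
  ultimately show "I \<in> (\<Union>J\<in>Dyad i. Qhat_cells i j J)" by blast
qed (auto simp: Qhat_cells_def)

lemma card_Qhat_cover_le:
  assumes "i \<ge> 1" "j \<ge> 1"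
  shows "card {I \<in> Dyad (i + j). I \<inter> Q i j \<noteq> {}} \<le> 10 * 2 ^ i"
proof -
  have "card {I \<in> Dyad (i + j). I \<inter> Q i j \<noteq> {}} \<le> (\<Sum>J\<in>Dyad i. card (Qhat_cells i j J))"
    unfolding Qhat_cover_eq_UN_Qhat_cells by (rule card_UN_le[OF finite_Dyad])
  also have "\<dots> \<le> (\<Sum>J\<in>Dyad i. 10)"
    using card_Qhat_cells_le[OF assms] by (intro sum_mono) (auto simp: Dyad_def)
  also have "\<dots> \<le> 10 * 2 ^ i" using card_Dyad_le[of i] by simp
  finally show ?thesis .
qed

lemma Q_subset_Qhat: "Q i j \<subseteq> Qhat i j"
  using Q_subset_circ circ_eq_Union_Dyad[of "i + j"] by (fastforce simp: Qhat_def)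

lemma Qhat_lmeasurable: "Qhat i j \<in> lmeasurable"
  unfolding Qhat_def by (rule Union_Dyad_lmeasurable) blast

lemma measure_Qhat_le:
  assumes "i \<ge> 1" "j \<ge> 1"
  shows "measure lebesgue (Qhat i j) \<le> 10 / 2 ^ j"
proof -
  have "measure lebesgue (Qhat i j) \<le> card {I \<in> Dyad (i + j). I \<inter> Q i j \<noteq> {}} / 2 ^ (i + j)"
    unfolding Qhat_def by (rule measure_Union_Dyad_le) blast
  also have "\<dots> \<le> real (10 * 2 ^ i) / 2 ^ (i + j)"
    using card_Qhat_cover_le[OF assms]
    by (intro divide_right_mono) (simp_all only: of_nat_le_iff zero_le_power zero_le_numeral)
  also have "\<dots> = 10 / 2 ^ j"
    by (simp add: power_add)
  finally show ?thesis .
qed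

theorem lemma4p2:
  fixes i j :: nat
  assumes "i \<ge> 1" and "j \<ge> 1"
  defines "M \<equiv> (15 :: nat)"
  shows "(\<forall>J \<in> Dyad i. \<exists>F. F \<subseteq> Dyad (i + j) \<and> card F \<le> M \<and> J \<inter> Qhat i j = \<Union> F)
    \<and> (\<exists>F. F \<subseteq> Dyad (i + j) \<and> card F \<le> M * 2 ^ i \<and> Qhat i j = \<Union> F)
    \<and> Q i j \<in> sets lebesgue \<and> Qhat i j \<in> sets lebesgue
    \<and> measure lebesgue (Q i j) \<le> measure lebesgue (Qhat i j)
    \<and> measure lebesgue (Qhat i j) \<le> real M * 2 powi (- int j)"
proof -
  have cells: "\<forall>J \<in> Dyad i. \<exists>F. F \<subseteq> Dyad (i + j) \<and> card F \<le> M \<and> J \<inter> Qhat i j = \<Union> F"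
  proof
    fix J assume J: "J \<in> Dyad i"
    then obtain n where "J = dint i n" by (auto simp: Dyad_def)
    then have "card (Qhat_cells i j J) \<le> M"
      using card_Qhat_cells_le[OF assms(1,2), of n] by (simp add: M_def)
    moreover have "Qhat_cells i j J \<subseteq> Dyad (i + j)" by (auto simp: Qhat_cells_def)
    ultimately show "\<exists>F. F \<subseteq> Dyad (i + j) \<and> card F \<le> M \<and> J \<inter> Qhat i j = \<Union> F"
      using Int_Qhat_eq_Union_Qhat_cells[OF J] by blast
  qed
  have cover: "\<exists>F. F \<subseteq> Dyad (i + j) \<and> card F \<le> M * 2 ^ i \<and> Qhat i j = \<Union> F"
    using card_Qhat_cover_le[OF assms(1,2)] unfolding M_def Qhat_def
    by (intro exI[of _ "{I \<in> Dyad (i + j). I \<inter> Q i j \<noteq> {}}"]) auto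
  have Q: "Q i j \<in> sets lebesgue" using Q_borel by simp
  have "(10 :: real) / 2 ^ j \<le> real M * 2 powi (- int j)"
    by (simp add: M_def power_int_minus_divide divide_right_mono)
  then have "measure lebesgue (Qhat i j) \<le> real M * 2 powi (- int j)"
    using measure_Qhat_le[OF assms(1,2)] by linarith
  then show ?thesis
    using cells cover Q Qhat_lmeasurable measure_mono_fmeasurable[OF Q_subset_Qhat Q Qhat_lmeasurable]
    by auto
qed

end
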